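(* Let $R \subseteq S \subseteq T$ be commutative ring extensions, and let $X = \{P \in \operatorname{Spec} S : P \cap R \text{ is a maximal ideal of } R\}$. Suppose that the contraction map $\operatorname{Spec} S \setminus X \to \operatorname{Spec} R \setminus \operatorname{Max} R$ is injective and that $R \subseteq S$ satisfies INC. If $R \subseteq T$ satisfies going-down, then so does $S \subseteq T$.
   Context: A ring extension $A \subseteq B$ satisfies going-down if whenever $\mathfrak{p} \subset \mathfrak{q}$ are primes of $A$ and $Q$ is a prime of $B$ with $Q \cap A = \mathfrak{q}$, there is a prime $P \subseteq Q$ of $B$ with $P \cap A = \mathfrak{p}$. It satisfies INC (incomparability) if distinct comparable primes $P \subsetneq P'$ of $B$ never have the same contraction to $A$. $\operatorname{Max} R$ denotes the set of maximal ideals of $R$. *)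

theory Defs
  imports Main
begin

text \<open>The largest ring T is modelled as a type of class comm_ring_1; the
intermediate rings R and S are subrings (subsets) of it.\<close>

definition is_subring :: "'a::comm_ring_1 set \<Rightarrow> bool" where
  "is_subring A \<longleftrightarrow> 0 \<in> A \<and> 1 \<in> A \<and>
     (\<forall>x\<in>A. \<forall>y\<in>A. x + y \<in> A \<and> x * y \<in> A) \<and> (\<forall>x\<in>A. - x \<in> A)"

definition ideal_of :: "'a::comm_ring_1 set \<Rightarrow> 'a set \<Rightarrow> bool" where
  "ideal_of A I \<longleftrightarrow> I \<subseteq> A \<and> 0 \<in> I \<and>
     (\<forall>x\<in>I. \<forall>y\<in>I. x + y \<in> I) \<and> (\<forall>a\<in>A. \<forall>x\<in>I. a * x \<in> I)"

definition prime_ideal_of :: "'a::comm_ring_1 set \<Rightarrow> 'a set \<Rightarrow> bool" where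
  "prime_ideal_of A P \<longleftrightarrow> ideal_of A P \<and> 1 \<notin> P \<and>
     (\<forall>a\<in>A. \<forall>b\<in>A. a * b \<in> P \<longrightarrow> a \<in> P \<or> b \<in> P)"

definition maximal_ideal_of :: "'a::comm_ring_1 set \<Rightarrow> 'a set \<Rightarrow> bool" where
  "maximal_ideal_of A M \<longleftrightarrow> ideal_of A M \<and> M \<noteq> A \<and>
     (\<forall>J. ideal_of A J \<and> M \<subseteq> J \<longrightarrow> J = M \<or> J = A)"

definition Spec :: "'a::comm_ring_1 set \<Rightarrow> 'a set set" where
  "Spec A = {P. prime_ideal_of A P}"

definition Max_spec :: "'a::comm_ring_1 set \<Rightarrow> 'a set set" where
  "Max_spec A = {M. maximal_ideal_of A M}"

definition going_down :: "'a::comm_ring_1 set \<Rightarrow> 'a set \<Rightarrow> bool" where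
  "going_down A B \<longleftrightarrow>
     (\<forall>p q Q. p \<in> Spec A \<and> q \<in> Spec A \<and> p \<subset> q \<and> Q \<in> Spec B \<and> Q \<inter> A = q \<longrightarrow>
        (\<exists>P\<in>Spec B. P \<subseteq> Q \<and> P \<inter> A = p))"

definition INC :: "'a::comm_ring_1 set \<Rightarrow> 'a set \<Rightarrow> bool" where
  "INC A B \<longleftrightarrow>
     (\<forall>P P'. P \<in> Spec B \<and> P' \<in> Spec B \<and> P \<subset> P' \<longrightarrow> P \<inter> A \<noteq> P' \<inter> A)"

end

theory Submission
  imports Defs
begin

text \<open>Going down along \<open>R \<subseteq> T\<close> produces, below \<open>Q\<close>, a prime \<open>P\<close> of \<open>T\<close> lying over
  \<open>p \<inter> R\<close>. By INC, \<open>p \<inter> R\<close> is strictly contained in the prime \<open>q \<inter> R\<close>, so it is not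
  maximal; hence \<open>P \<inter> S\<close> and \<open>p\<close> are primes of \<open>S\<close> outside \<open>X\<close> with the same
  contraction to \<open>R\<close>, and injectivity forces \<open>P \<inter> S = p\<close>.\<close>

lemma prime_ideal_of_Int:
  assumes "prime_ideal_of B P" "is_subring A" "A \<subseteq> B"
  shows "prime_ideal_of A (P \<inter> A)"
  using assms unfolding prime_ideal_of_def ideal_of_def is_subring_def
  by (auto simp: subset_iff)

lemma Spec_Int:
  assumes "P \<in> Spec B" "is_subring A" "A \<subseteq> B"
  shows "P \<inter> A \<in> Spec A"
  using assms prime_ideal_of_Int by (auto simp: Spec_def)

lemma INC_psubset_Int:
  assumes "INC A B" "P \<in> Spec B" "P' \<in> Spec B" "P \<subset> P'"
  shows "P \<inter> A \<subset> P' \<inter> A"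
  using assms unfolding INC_def by blast

lemma psubset_Spec_not_Max_spec:
  assumes "is_subring A" "q \<in> Spec A" "p \<subset> q"
  shows "p \<notin> Max_spec A"
proof
  assume "p \<in> Max_spec A"
  with assms(2,3) have "q = p \<or> q = A"
    unfolding Max_spec_def maximal_ideal_of_def Spec_def prime_ideal_of_def by blast
  moreover have "1 \<in> A" "1 \<notin> q"
    using assms(1,2) unfolding is_subring_def Spec_def prime_ideal_of_def by auto
  ultimately show False
    using assms(3) by blast
qed

theorem lemma5p1:
  fixes R S :: "'a::comm_ring_1 set"
  assumes "is_subring R" and "is_subring S" and "R \<subseteq> S"
    and "inj_on (\<lambda>P. P \<inter> R) (Spec S - {P \<in> Spec S. P \<inter> R \<in> Max_spec R})"
    and "INC R S"
    and "going_down R (UNIV :: 'a set)"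
  shows "going_down S (UNIV :: 'a set)"
  unfolding going_down_def
proof (intro allI impI, elim conjE)
  fix p q Q
  assume p: "p \<in> Spec S" and q: "q \<in> Spec S" and "p \<subset> q"
    and Q: "Q \<in> Spec (UNIV :: 'a set)" and Q_over_q: "Q \<inter> S = q"
  have qR: "q \<inter> R \<in> Spec R" and pR: "p \<inter> R \<in> Spec R"
    using p q Spec_Int assms(1,3) by auto
  have pq_R: "p \<inter> R \<subset> q \<inter> R"
    using INC_psubset_Int[OF assms(5) p q \<open>p \<subset> q\<close>] .
  have "Q \<inter> R = q \<inter> R"
    using Q_over_q assms(3) by blast
  then obtain P where P: "P \<in> Spec (UNIV :: 'a set)" "P \<subseteq> Q" "P \<inter> R = p \<inter> R"
    using assms(6) pR qR pq_R Q unfolding going_down_def by metis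
  have PS: "P \<inter> S \<in> Spec S"
    using Spec_Int[OF P(1) assms(2)] by simp
  have "p \<inter> R \<notin> Max_spec R"
    using psubset_Spec_not_Max_spec[OF assms(1) qR pq_R] .
  moreover have "(P \<inter> S) \<inter> R = p \<inter> R"
    using P(3) assms(3) by blast
  ultimately have "P \<inter> S = p"
    using assms(4) PS p unfolding inj_on_def by auto
  with P show "\<exists>P\<in>Spec UNIV. P \<subseteq> Q \<and> P \<inter> S = p"
    by blast
qed

end
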